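(* In the replace-after-fixed-time process with parameters $\lambda>0$, $r>0$, for every integer $n\ge1$ and every $t\in[nr,(n+1)r)$, \[ \frac{E[N(t)]}{t}=\lambda(1+u_n)+\frac{u_n-\lambda r v_n}{t}, \] where \[ u_n=\sum_{k=1}^n e^{-\lambda k r}=\frac{e^{-\lambda r}}{1-e^{-\lambda r}}\big(1-e^{-\lambda n r}\big),\qquad v_n=\sum_{k=1}^n k e^{-\lambda k r}=\frac{e^{-\lambda r}}{(1-e^{-\lambda r})^2}\big(1-(n+1)e^{-\lambda n r}+n e^{-\lambda(n+1)r}\big). \]
   Context: Let $X_1,X_2,\ldots$ be independent random variables, each exponentially distributed with rate $\lambda>0$ (density $\lambda e^{-\lambda x}$ for $x>0$). Fix $r>0$ and set $Y_k=\min(X_k,r)$. For $t\ge 0$ let $N(t)=\max\{n\ge 0:\sum_{k=1}^n Y_k\le t\}$ (the replace-after-fixed-time, or RaFT, process). *)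

theory Defs
  imports "HOL-Probability.Probability"
begin

definition raft_count :: "(nat \<Rightarrow> 'a \<Rightarrow> real) \<Rightarrow> real \<Rightarrow> real \<Rightarrow> 'a \<Rightarrow> nat" where
  "raft_count X r t \<omega> = Max {n. (\<Sum>k\<in>{1..n}. min (X k \<omega>) r) \<le> t}"

end

theory Submission
  imports Defs
begin

text \<open>
  Write S_k = Y_1 + ... + Y_k. The expected count is E N(t) = U(t) - 1 for the renewal
  function U(t) = sum_{k >= 0} P(S_k <= t), and conditioning on the first lifetime gives the
  renewal equation U(t) = [t >= 0] + E U(t - Y). The law of Y has density l e^(-l x) on [0, r)
  and an atom e^(-l r) at r, so integrating explicitly over the segments [n r, (n+1) r) shows
  that the piecewise linear candidate H(t) = 1 + (u_n - l r v_n) + l (1 + u_n) t solves the same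
  equation. Locally bounded solutions vanishing on the negative axis are unique: iterating the
  equation bounds their difference on (-inf, t] by a multiple of P(S_k <= t) <= e^t (E e^(-Y))^k,
  which tends to 0. Hence U = H.
\<close>

lemma Max_nat_eq_iff:
  fixes A :: "nat set"
  assumes "A \<noteq> {}"
  shows "Max A = j \<longleftrightarrow> (if \<exists>m. \<forall>a\<in>A. a \<le> m then j \<in> A \<and> (\<forall>a\<in>A. a \<le> j) else Max UNIV = j)"
proof (cases "finite A")
  case True
  then show ?thesis
    using assms by (auto simp: Max_eq_iff finite_nat_set_iff_bounded_le)
next
  case False
  then have "Max A = Max (UNIV :: nat set)"
    by (simp add: Max.eq_fold')
  with False show ?thesis
    by (auto simp: finite_nat_set_iff_bounded_le)
qed

lemma interval_integral_FTC_real: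
  fixes f F :: "real \<Rightarrow> real"
  assumes "a \<le> b" and "\<And>x. (F has_real_derivative f x) (at x)" and "continuous_on {a..b} f"
  shows "(LBINT x=a..b. f x) = F b - F a"
  by (rule interval_integral_FTC_finite)
     (use assms in \<open>auto simp: min_def max_def has_real_derivative_iff_has_vector_derivative[symmetric]
        intro: has_field_derivative_at_within\<close>)

lemma interval_integral_cong_Ioo:
  fixes a b :: real
  assumes "a \<le> b" and "\<And>x. a < x \<Longrightarrow> x < b \<Longrightarrow> f x = g x"
  shows "(LBINT x=a..b. f x) = (LBINT x=a..b. g x)"
  by (rule interval_integral_cong) (use assms in \<open>auto simp: einterval_iff min_def max_def\<close>)

lemma interval_integrable_bounded:
  fixes f :: "real \<Rightarrow> real"
  assumes [measurable]: "f \<in> borel_measurable borel"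
    and "a \<le> b" and "\<And>x. a \<le> x \<Longrightarrow> x \<le> b \<Longrightarrow> \<bar>f x\<bar> \<le> B"
  shows "interval_lebesgue_integrable lborel (ereal a) (ereal b) f"
proof -
  have "set_integrable lborel {a<..<b} f"
    unfolding set_integrable_def
    by (rule integrableI_bounded_set[where A="{a<..<b}" and B=B])
       (use assms in \<open>auto simp: emeasure_lborel_Ioo\<close>)
  moreover have "einterval (ereal a) (ereal b) = {a<..<b}"
    by (auto simp: einterval_iff)
  ultimately show ?thesis
    using assms(2) unfolding interval_lebesgue_integrable_def by simp
qed

lemma sum_power_closed_form:
  fixes q :: "'a :: field"
  assumes "q \<noteq> 1"
  shows "(\<Sum>k\<in>{1..n}. q ^ k) = q / (1 - q) * (1 - q ^ n)"
proof (induction n)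
  case (Suc n)
  have "1 - q \<noteq> 0" using assms by simp
  then have "q / (1 - q) * (1 - q ^ n) + q ^ Suc n = q / (1 - q) * (1 - q ^ Suc n)"
    by (simp add: field_simps)
  with Suc show ?case
    by simp
qed simp

lemma sum_of_nat_mult_power_closed_form:
  fixes q :: "'a :: field"
  assumes "q \<noteq> 1"
  shows "(\<Sum>k\<in>{1..n}. of_nat k * q ^ k)
           = q / (1 - q)^2 * (1 - of_nat (n + 1) * q ^ n + of_nat n * q ^ (n + 1))"
proof (induction n)
  case (Suc n)
  have "(1 - q)^2 \<noteq> 0" using assms by simp
  then have "q / (1 - q)^2 * (1 - of_nat (n + 1) * q ^ n + of_nat n * q ^ (n + 1))
               + of_nat (Suc n) * q ^ Suc n
             = q / (1 - q)^2 * (1 - of_nat (Suc n + 1) * q ^ Suc n + of_nat (Suc n) * q ^ (Suc n + 1))"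
    by (simp add: divide_simps) (simp add: algebra_simps power2_eq_square)
  with Suc show ?case
    by simp
qed simp

locale raft = prob_space M for M :: "'a measure" +
  fixes X :: "nat \<Rightarrow> 'a \<Rightarrow> real" and l r :: real
  assumes indep: "indep_vars (\<lambda>_. borel) X {1..}"
    and distr: "\<And>k. k \<ge> 1 \<Longrightarrow> distributed M lborel (X k) (exponential_density l)"
    and l_pos: "0 < l" and r_pos: "0 < r"
begin

definition Y :: "nat \<Rightarrow> 'a \<Rightarrow> real" where
  "Y k \<omega> = min (X k \<omega>) r"

definition S :: "nat \<Rightarrow> 'a \<Rightarrow> real" where
  "S k \<omega> = (\<Sum>i\<in>{1..k}. Y i \<omega>)"

definition F :: "nat \<Rightarrow> real \<Rightarrow> real" where
  "F k t = prob {\<omega>\<in>space M. S k \<omega> \<le> t}"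

definition Y_law :: "real measure" where
  "Y_law = distr (density lborel (exponential_density l)) borel (\<lambda>x. min x r)"

lemma X_measurable[measurable]: "k \<in> {1..} \<Longrightarrow> X k \<in> borel_measurable M"
  using distr[of k] by (auto dest: distributed_measurable)

lemma Y_measurable[measurable]: "k \<in> {1..} \<Longrightarrow> Y k \<in> borel_measurable M"
  unfolding Y_def[abs_def] by measurable

lemma S_measurable[measurable]: "S k \<in> borel_measurable M"
  unfolding S_def[abs_def] by measurable

lemma S_Suc: "S (Suc k) \<omega> = S k \<omega> + Y (Suc k) \<omega>"
  by (simp add: S_def)

lemma prob_space_Y_law: "prob_space Y_law"
  unfolding Y_law_def using l_pos
  by (intro prob_space.prob_space_distr prob_space_exponential_density) auto

lemma sets_Y_law[simp, measurable_cong]: "sets Y_law = sets borel"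
  by (simp add: Y_law_def)

lemma distr_Y: "k \<ge> 1 \<Longrightarrow> distr M borel (Y k) = Y_law"
  unfolding Y_def[abs_def] Y_law_def
  by (subst distributed_distr_eq_density[OF distr, symmetric]) (auto simp: distr_distr comp_def)

lemma indep_Y_S: "indep_var borel (Y (Suc k)) borel (S k)"
proof -
  have "indep_var (PiM {Suc k} (\<lambda>_. borel)) (\<lambda>\<omega>. restrict (\<lambda>i. X i \<omega>) {Suc k})
                  (PiM {1..k} (\<lambda>_. borel)) (\<lambda>\<omega>. restrict (\<lambda>i. X i \<omega>) {1..k})"
    by (rule indep_var_restrict[OF indep]) auto
  then have "indep_var borel ((\<lambda>f. min (f (Suc k)) r) \<circ> (\<lambda>\<omega>. restrict (\<lambda>i. X i \<omega>) {Suc k}))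
                       borel ((\<lambda>f. \<Sum>i\<in>{1..k}. min (f i) r) \<circ> (\<lambda>\<omega>. restrict (\<lambda>i. X i \<omega>) {1..k}))"
    by (rule indep_var_compose) measurable
  moreover have "(\<lambda>f. min (f (Suc k)) r) \<circ> (\<lambda>\<omega>. restrict (\<lambda>i. X i \<omega>) {Suc k}) = Y (Suc k)"
    and "(\<lambda>f. \<Sum>i\<in>{1..k}. min (f i) r) \<circ> (\<lambda>\<omega>. restrict (\<lambda>i. X i \<omega>) {1..k}) = S k"
    by (auto simp: S_def Y_def fun_eq_iff)
  ultimately show ?thesis
    by simp
qed

lemma F_mono: "mono (F k)"
  unfolding F_def mono_def by (auto intro!: finite_measure_mono)

lemma F_measurable[measurable]: "F k \<in> borel_measurable borel"
  by (rule borel_measurable_mono[OF F_mono])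

lemma F_nonneg: "0 \<le> F k t"
  by (simp add: F_def)

lemma F_le_1: "F k t \<le> 1"
  by (simp add: F_def)

lemma F_0: "F 0 t = (if 0 \<le> t then 1 else 0)"
  by (simp add: F_def S_def prob_space)

lemma AE_Y_law: "AE y in Y_law. 0 \<le> y \<and> y \<le> r"
  unfolding Y_law_def using r_pos
  by (subst AE_distr_iff) (auto simp: AE_density exponential_density_def)

lemma integrable_Y_law:
  fixes f :: "real \<Rightarrow> real"
  assumes [measurable]: "f \<in> borel_measurable borel"
    and "\<And>y. 0 \<le> y \<Longrightarrow> y \<le> r \<Longrightarrow> \<bar>f y\<bar> \<le> B"
  shows "integrable Y_law f"
proof -
  interpret Y_law: prob_space Y_law
    by (rule prob_space_Y_law)
  show ?thesis
  proof (rule Y_law.integrable_const_bound[where B=B])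
    show "AE x in Y_law. norm (f x) \<le> B"
      using AE_Y_law by eventually_elim (use assms(2) in auto)
  qed (simp add: measurable_cong_sets[OF sets_Y_law refl])
qed

lemma F_Suc: "F (Suc k) t = (\<integral>y. F k (t - y) \<partial>Y_law)"
proof -
  interpret S: prob_space "distr M borel (S k)"
    by (rule prob_space_distr) measurable
  have joint: "Y_law \<Otimes>\<^sub>M distr M borel (S k) = distr M (borel \<Otimes>\<^sub>M borel) (\<lambda>\<omega>. (Y (Suc k) \<omega>, S k \<omega>))"
  proof -
    have "distr M borel (Y (Suc k)) \<Otimes>\<^sub>M distr M borel (S k)
          = distr M (borel \<Otimes>\<^sub>M borel) (\<lambda>\<omega>. (Y (Suc k) \<omega>, S k \<omega>))"
      using indep_Y_S[of k] unfolding indep_var_distribution_eq by blast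
    then show ?thesis
      by (simp add: distr_Y)
  qed
  define A where "A = (\<lambda>p. fst p + snd p) -` {..t} \<inter> space (borel \<Otimes>\<^sub>M borel)"
  have A[measurable]: "A \<in> sets (borel \<Otimes>\<^sub>M borel)"
    unfolding A_def by (intro measurable_sets[of _ _ borel] atMost_borel) measurable
  have "emeasure M {\<omega>\<in>space M. S (Suc k) \<omega> \<le> t}
        = emeasure (distr M (borel \<Otimes>\<^sub>M borel) (\<lambda>\<omega>. (Y (Suc k) \<omega>, S k \<omega>))) A"
    by (subst emeasure_distr[OF _ A], measurable)
       (auto simp: A_def S_Suc space_pair_measure intro!: arg_cong[where f="emeasure M"])
  also have "\<dots> = (\<integral>\<^sup>+y. emeasure (distr M borel (S k)) (Pair y -` A) \<partial>Y_law)"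
    unfolding joint[symmetric]
    by (rule S.emeasure_pair_measure_alt) (simp add: sets_pair_measure_cong[OF sets_Y_law refl])
  also have "\<dots> = (\<integral>\<^sup>+y. ennreal (F k (t - y)) \<partial>Y_law)"
    unfolding F_def
    by (intro nn_integral_cong, subst emeasure_distr[OF _ sets_Pair1[OF A]])
       (auto simp: A_def space_pair_measure emeasure_eq_measure intro!: arg_cong[where f="prob"])
  finally show ?thesis
    unfolding F_def
    by (subst integral_eq_nn_integral) (auto simp: F_nonneg F_def measure_def)
qed

lemma F_neg: "t < 0 \<Longrightarrow> F k t = 0"
proof (induction k arbitrary: t)
  case (Suc k)
  have "AE y in Y_law. F k (t - y) = 0"
    using AE_Y_law by eventually_elim (use Suc in auto)
  then show ?case
    unfolding F_Suc by (rule integral_eq_zero_AE)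
qed (simp add: F_0)

lemma measure_exponential_density_greaterThan:
  "measure (density lborel (exponential_density l)) {r<..} = exp (- r * l)"
proof -
  have "measure (density lborel (exponential_density l)) {r<..} = measure (distr M lborel (X 1)) {r<..}"
    by (simp add: distributed_distr_eq_density[OF distr])
  also have "\<dots> = prob {\<omega>\<in>space M. r < X 1 \<omega>}"
    by (subst measure_distr) (auto intro!: arg_cong[where f=prob])
  also have "\<dots> = exp (- r * l)"
    by (rule exponential_distributedD_gt[OF distr]) (use r_pos l_pos in auto)
  finally show ?thesis .
qed

lemma integral_Y_law:
  fixes f :: "real \<Rightarrow> real"
  assumes [measurable]: "f \<in> borel_measurable borel"
    and bounded: "\<And>y. 0 \<le> y \<Longrightarrow> y \<le> r \<Longrightarrow> \<bar>f y\<bar> \<le> B"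
  shows "(\<integral>y. f y \<partial>Y_law) = (LBINT x=0..r. l * exp (- l * x) * f x) + exp (- l * r) * f r"
proof -
  let ?ed = "exponential_density l"
  define g where "g x = ?ed x * f (min x r)" for x
  have [measurable]: "g \<in> borel_measurable borel"
    unfolding g_def[abs_def] by measurable
  have "integrable Y_law f"
    by (rule integrable_Y_law[where B=B]) (use bounded in auto)
  then have "integrable (density lborel ?ed) (\<lambda>x. f (min x r))"
    unfolding Y_law_def by (subst (asm) integrable_distr_eq) auto
  then have int_g: "integrable lborel g"
    unfolding g_def using l_pos by (subst (asm) integrable_density) (auto simp: exponential_density_nonneg)
  have "(\<integral>y. f y \<partial>Y_law) = (\<integral>x. g x \<partial>lborel)"
    unfolding Y_law_def g_def using l_pos
    by (simp add: integral_distr integral_density exponential_density_nonneg)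
  also have "\<dots> = (\<integral>x. indicator {0..r} x * g x + indicator {r<..} x * g x \<partial>lborel)"
    by (rule Bochner_Integration.integral_cong)
       (auto simp: g_def indicator_def exponential_density_def)
  also have "\<dots> = (\<integral>x. indicator {0..r} x * g x \<partial>lborel) + (\<integral>x. indicator {r<..} x * g x \<partial>lborel)"
    by (rule Bochner_Integration.integral_add) (use integrable_mult_indicator[OF _ int_g] in auto)
  also have "(\<integral>x. indicator {0..r} x * g x \<partial>lborel) = (LBINT x:{0..r}. l * exp (- l * x) * f x)"
    unfolding set_lebesgue_integral_def
    by (rule Bochner_Integration.integral_cong) (auto simp: indicator_def g_def exponential_density_def mult_ac)
  also have "\<dots> = (LBINT x=0..r. l * exp (- l * x) * f x)"
    using r_pos interval_integral_Icc[of 0 r "\<lambda>x. l * exp (- l * x) * f x"] by (simp add: zero_ereal_def)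
  also have "(\<integral>x. indicator {r<..} x * g x \<partial>lborel) = f r * (\<integral>x. ?ed x * indicator {r<..} x \<partial>lborel)"
    unfolding integral_mult_right_zero[symmetric]
    by (rule Bochner_Integration.integral_cong) (auto simp: g_def indicator_def)
  also have "(\<integral>x. ?ed x * indicator {r<..} x \<partial>lborel) = measure (density lborel ?ed) {r<..}"
  proof -
    interpret ed: prob_space "density lborel ?ed"
      using l_pos by (rule prob_space_exponential_density)
    have "ed.prob {r<..} = (\<integral>x. indicator {r<..} x \<partial>density lborel ?ed)"
      by simp
    also have "\<dots> = (\<integral>x. ?ed x * indicator {r<..} x \<partial>lborel)"
      using l_pos by (subst integral_density) (auto simp: exponential_density_nonneg)
    finally show ?thesis ..
  qed
  finally show ?thesis
    by (simp add: measure_exponential_density_greaterThan mult_ac)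
qed

definition laplace_Y :: real where
  "laplace_Y = (\<integral>y. exp (- y) \<partial>Y_law)"

lemma laplace_Y_eq: "laplace_Y = (l + exp (- (l + 1) * r)) / (l + 1)"
proof -
  have "((\<lambda>x. - l / (l + 1) * exp (- (l + 1) * x)) has_real_derivative l * exp (- l * x) * exp (- x)) (at x)"
    for x
  proof -
    have "((\<lambda>x. - l / (l + 1) * exp (- (l + 1) * x)) has_real_derivative
            - l / (l + 1) * (exp (- (l + 1) * x) * - (l + 1))) (at x)"
      by (intro derivative_eq_intros) auto
    moreover have "- l / (l + 1) * (exp (- (l + 1) * x) * - (l + 1)) = l * exp (- l * x) * exp (- x)"
      using l_pos by (simp add: mult_exp_exp field_simps)
    ultimately show ?thesis
      by simp
  qed
  then have "(LBINT x=0..r. l * exp (- l * x) * exp (- x))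
             = - l / (l + 1) * exp (- (l + 1) * r) - - l / (l + 1) * exp (- (l + 1) * 0)"
    using r_pos by (intro interval_integral_FTC_real[where a=0, simplified zero_ereal_def[symmetric]]
        continuous_intros) auto
  moreover have "laplace_Y = (LBINT x=0..r. l * exp (- l * x) * exp (- x)) + exp (- l * r) * exp (- r)"
    unfolding laplace_Y_def by (rule integral_Y_law[where B=1]) auto
  moreover have "exp (- l * r) * exp (- r) = exp (- (l + 1) * r)"
    by (simp add: mult_exp_exp algebra_simps)
  moreover have "- l / (l + 1) * E - - l / (l + 1) * exp (- (l + 1) * 0) + E = (l + E) / (l + 1)" for E
  proof -
    have "l + 1 \<noteq> 0"
      using l_pos by simp
    then show ?thesis
      by (simp add: divide_simps) (simp add: algebra_simps)
  qed
  ultimately show ?thesis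
    by simp
qed

lemma laplace_Y_nonneg: "0 \<le> laplace_Y"
  unfolding laplace_Y_def by (rule integral_nonneg_AE) auto

lemma laplace_Y_less_1: "laplace_Y < 1"
proof -
  have "- (l + 1) * r < 0"
    using l_pos r_pos by (intro mult_neg_pos) auto
  then have "exp (- (l + 1) * r) < 1"
    by simp
  then show ?thesis
    using l_pos by (simp add: laplace_Y_eq field_simps)
qed

text \<open>A Chernoff bound: P(S_k <= t) <= E e^(t - S_k) = e^t (E e^(-Y))^k.\<close>

lemma F_le_exp_laplace: "F k t \<le> exp t * laplace_Y ^ k"
proof (induction k arbitrary: t)
  case (Suc k)
  have "F (Suc k) t \<le> (\<integral>y. exp t * laplace_Y ^ k * exp (- y) \<partial>Y_law)"
    unfolding F_Suc
  proof (rule integral_mono)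
    show "integrable Y_law (\<lambda>y. F k (t - y))"
      by (rule integrable_Y_law[where B=1]) (auto simp: F_nonneg F_le_1)
    show "integrable Y_law (\<lambda>y. exp t * laplace_Y ^ k * exp (- y))"
      by (intro integrable_mult_right integrable_Y_law[where B=1]) auto
    show "F k (t - y) \<le> exp t * laplace_Y ^ k * exp (- y)" for y
      using Suc[of "t - y"] by (simp add: exp_diff exp_minus field_simps)
  qed
  then show ?case
    by (simp add: laplace_Y_def mult_ac)
qed (simp add: F_0)

lemma summable_F: "summable (\<lambda>k. F k t)"
proof (rule summable_comparison_test)
  show "\<exists>N. \<forall>k\<ge>N. norm (F k t) \<le> exp t * laplace_Y ^ k"
    using F_le_exp_laplace F_nonneg by auto
  show "summable (\<lambda>k. exp t * laplace_Y ^ k)"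
    using laplace_Y_nonneg laplace_Y_less_1 by (intro summable_mult summable_geometric) auto
qed

lemma summable_F_Suc: "summable (\<lambda>k. F (Suc k) t)"
  using summable_F summable_Suc_iff[of "\<lambda>k. F k t"] by simp

lemma F_tendsto_0: "(\<lambda>k. F k t) \<longlonglongrightarrow> 0"
  using summable_F by (rule summable_LIMSEQ_zero)

lemma renewal_equation_unique:
  fixes D :: "real \<Rightarrow> real"
  assumes [measurable]: "D \<in> borel_measurable borel"
    and neg: "\<And>s. s < 0 \<Longrightarrow> D s = 0"
    and eq: "\<And>s. D s = (\<integral>y. D (s - y) \<partial>Y_law)"
    and locally_bounded: "\<And>T. \<exists>B. \<forall>s\<le>T. \<bar>D s\<bar> \<le> B"
  shows "D t = 0"
proof -
  obtain B where B: "\<And>s. s \<le> t \<Longrightarrow> \<bar>D s\<bar> \<le> B"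
    using locally_bounded by blast
  have "\<bar>D s\<bar> \<le> B * F k s" if "s \<le> t" for k s
    using that
  proof (induction k arbitrary: s)
    case 0
    then show ?case
      using B neg by (cases "s < 0") (auto simp: F_0)
  next
    case (Suc k)
    have "\<bar>D s\<bar> \<le> (\<integral>y. \<bar>D (s - y)\<bar> \<partial>Y_law)"
      using integral_norm_bound[of Y_law "\<lambda>y. D (s - y)"] eq[of s] by simp
    also have "\<dots> \<le> (\<integral>y. B * F k (s - y) \<partial>Y_law)"
    proof (rule integral_mono_AE)
      show "integrable Y_law (\<lambda>y. \<bar>D (s - y)\<bar>)"
        by (rule integrable_Y_law[where B=B]) (use B Suc.prems in auto)
      show "integrable Y_law (\<lambda>y. B * F k (s - y))"
        by (intro integrable_mult_right integrable_Y_law[where B=1]) (auto simp: F_nonneg F_le_1)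
      show "AE y in Y_law. \<bar>D (s - y)\<bar> \<le> B * F k (s - y)"
        using AE_Y_law by eventually_elim (use Suc in auto)
    qed
    also have "\<dots> = B * F (Suc k) s"
      by (simp add: F_Suc)
    finally show ?case .
  qed
  then have "\<bar>D t\<bar> \<le> B * F k t" for k
    by simp
  moreover have "(\<lambda>k. B * F k t) \<longlonglongrightarrow> 0"
    using tendsto_mult_right_zero[OF F_tendsto_0] by simp
  ultimately have "\<bar>D t\<bar> \<le> 0"
    by (intro LIMSEQ_le_const) auto
  then show ?thesis
    by simp
qed

definition renewal :: "real \<Rightarrow> real" where
  "renewal t = (\<Sum>k. F k t)"

lemma renewal_le: "renewal t \<le> exp t / (1 - laplace_Y)"
proof -
  have "renewal t \<le> (\<Sum>k. exp t * laplace_Y ^ k)"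
    unfolding renewal_def using laplace_Y_nonneg laplace_Y_less_1
    by (intro suminf_le summable_F summable_mult summable_geometric F_le_exp_laplace) auto
  also have "\<dots> = exp t / (1 - laplace_Y)"
    using laplace_Y_nonneg laplace_Y_less_1 by (simp add: suminf_mult suminf_geometric)
  finally show ?thesis .
qed

lemma renewal_nonneg: "0 \<le> renewal t"
  unfolding renewal_def by (intro suminf_nonneg summable_F F_nonneg)

lemma renewal_locally_bounded: "s \<le> T \<Longrightarrow> \<bar>renewal s\<bar> \<le> exp T / (1 - laplace_Y)"
  using renewal_le[of s] renewal_nonneg[of s] laplace_Y_less_1
    divide_right_mono[of "exp s" "exp T" "1 - laplace_Y"]
  by simp

lemma renewal_mono: "mono renewal"
  unfolding renewal_def mono_def by (auto intro!: suminf_le summable_F monoD[OF F_mono])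

lemma renewal_measurable[measurable]: "renewal \<in> borel_measurable borel"
  by (rule borel_measurable_mono[OF renewal_mono])

lemma renewal_neg: "t < 0 \<Longrightarrow> renewal t = 0"
  by (simp add: renewal_def F_neg)

lemma renewal_equation: "renewal t = (if 0 \<le> t then 1 else 0) + (\<integral>y. renewal (t - y) \<partial>Y_law)"
proof -
  have "renewal t = (\<Sum>k. F (Suc k) t) + F 0 t"
    unfolding renewal_def using suminf_split_head[OF summable_F[of t]] by simp
  also have "(\<Sum>k. F (Suc k) t) = (\<Sum>k. \<integral>y. F k (t - y) \<partial>Y_law)"
    by (simp add: F_Suc)
  also have "\<dots> = (\<integral>y. renewal (t - y) \<partial>Y_law)"
    unfolding renewal_def
  proof (rule integral_suminf[symmetric])
    show "integrable Y_law (\<lambda>y. F k (t - y))" for k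
      by (rule integrable_Y_law[where B=1]) (auto simp: F_nonneg F_le_1)
    show "AE y in Y_law. summable (\<lambda>k. norm (F k (t - y)))"
      using summable_F by (simp add: F_nonneg)
    show "summable (\<lambda>k. \<integral>y. norm (F k (t - y)) \<partial>Y_law)"
      using summable_F_Suc[of t] by (simp add: F_nonneg F_Suc[symmetric])
  qed
  finally show ?thesis
    by (simp add: F_0)
qed

definition u :: "nat \<Rightarrow> real" where
  "u n = (\<Sum>k\<in>{1..n}. exp (- l * real k * r))"

definition v :: "nat \<Rightarrow> real" where
  "v n = (\<Sum>k\<in>{1..n}. real k * exp (- l * real k * r))"

definition renewal_seg :: "nat \<Rightarrow> real \<Rightarrow> real" where
  "renewal_seg n x = 1 + (u n - l * r * v n) + l * (1 + u n) * x"

definition renewal_closed :: "real \<Rightarrow> real" where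
  "renewal_closed x = (if x < 0 then 0 else renewal_seg (nat \<lfloor>x / r\<rfloor>) x)"

lemma u_Suc: "u (Suc m) = u m + exp (- l * real (Suc m) * r)"
  by (simp add: u_def)

lemma v_Suc: "v (Suc m) = v m + real (Suc m) * exp (- l * real (Suc m) * r)"
  by (simp add: v_def)

lemma exp_neg_l_r_neq_1: "exp (- l * r) \<noteq> 1"
  using l_pos r_pos by simp

lemma exp_neg_l_r_power: "exp (- l * real k * r) = exp (- l * r) ^ k"
  by (simp add: exp_of_nat_mult[symmetric] mult_ac)

lemma u_closed_form: "u n = exp (- l * r) / (1 - exp (- l * r)) * (1 - exp (- l * real n * r))"
  unfolding u_def exp_neg_l_r_power by (rule sum_power_closed_form[OF exp_neg_l_r_neq_1])

lemma v_closed_form: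
  "v n = exp (- l * r) / (1 - exp (- l * r))^2
           * (1 - real (n + 1) * exp (- l * real n * r) + real n * exp (- l * real (n + 1) * r))"
  unfolding v_def exp_neg_l_r_power by (rule sum_of_nat_mult_power_closed_form[OF exp_neg_l_r_neq_1])

lemma u_Suc_eq_mult: "u (Suc m) = exp (- l * r) * (1 + u m)"
proof -
  have "1 - exp (- l * r) \<noteq> 0"
    using exp_neg_l_r_neq_1 by simp
  then show ?thesis
    unfolding u_closed_form exp_neg_l_r_power by (simp add: field_simps)
qed

lemma u_bounds: "0 \<le> u n \<and> u n \<le> real n"
proof -
  have "u n \<le> (\<Sum>k\<in>{1..n}. 1)"
    unfolding u_def using l_pos r_pos by (intro sum_mono) simp
  then show ?thesis
    unfolding u_def by (auto intro: sum_nonneg)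
qed

lemma v_bounds: "0 \<le> v n \<and> v n \<le> real n * real n"
proof -
  have "real k * exp (- l * real k * r) \<le> real n" if "k \<in> {1..n}" for k
  proof -
    have "exp (- l * real k * r) \<le> 1"
      using l_pos r_pos by simp
    then have "real k * exp (- l * real k * r) \<le> real n * 1"
      using that by (intro mult_mono) auto
    then show ?thesis
      by simp
  qed
  then have "v n \<le> (\<Sum>k\<in>{1..n}. real n)"
    unfolding v_def by (intro sum_mono)
  then show ?thesis
    unfolding v_def by (auto intro: sum_nonneg)
qed

lemma renewal_closed_eq_seg:
  assumes "real n * r \<le> x" and "x < real (Suc n) * r"
  shows "renewal_closed x = renewal_seg n x"
proof -
  have "real n \<le> x / r" and "x / r < real n + 1"
    using assms r_pos by (auto simp: field_simps)
  then have "\<lfloor>x / r\<rfloor> = int n"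
    by (intro floor_unique) auto
  moreover have "0 \<le> real n * r"
    using r_pos by simp
  then have "0 \<le> x"
    using assms(1) by linarith
  ultimately show ?thesis
    by (simp add: renewal_closed_def)
qed

lemma renewal_closed_measurable[measurable]: "renewal_closed \<in> borel_measurable borel"
proof -
  have "(\<lambda>x. renewal_seg (nat \<lfloor>x / r\<rfloor>) x) \<in> borel_measurable borel"
    by (rule measurable_compose_countable'[where I=UNIV]) (auto simp: renewal_seg_def)
  then show ?thesis
    unfolding renewal_closed_def by measurable
qed

lemma renewal_closed_bound:
  assumes "0 \<le> s" and "s \<le> T"
  shows "\<bar>renewal_closed s\<bar> \<le> 1 + T / r + l * r * (T / r) * (T / r) + l * (1 + T / r) * T"
proof -
  define n where "n = nat \<lfloor>s / r\<rfloor>"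
  have "real n \<le> s / r"
    unfolding n_def using assms r_pos by (simp add: of_nat_nat)
  also have "\<dots> \<le> T / r"
    using assms r_pos by (simp add: divide_right_mono)
  finally have n_le: "real n \<le> T / r" .
  have u: "0 \<le> u n" "u n \<le> T / r"
    using u_bounds[of n] n_le by auto
  have "0 \<le> T / r"
    using assms r_pos by simp
  then have "v n \<le> (T / r) * (T / r)"
    using v_bounds[of n] mult_mono[OF n_le n_le] by simp
  then have "l * r * v n \<le> l * r * ((T / r) * (T / r))"
    using l_pos r_pos by (intro mult_left_mono) auto
  then have v: "0 \<le> v n" "l * r * v n \<le> l * r * (T / r) * (T / r)"
    using v_bounds[of n] by (simp_all only: mult.assoc)
  have "l * (1 + u n) * s \<le> l * (1 + T / r) * T"
    using u assms l_pos by (intro mult_mono mult_left_mono) auto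
  moreover have "0 \<le> l * (1 + u n) * s" "0 \<le> l * r * v n"
    using u v assms l_pos r_pos by auto
  ultimately show ?thesis
    using assms u v by (simp add: renewal_closed_def renewal_seg_def n_def[symmetric] abs_le_iff)
qed

lemma renewal_closed_locally_bounded: "\<exists>B. \<forall>s\<le>T. \<bar>renewal_closed s\<bar> \<le> B"
proof -
  define T' where "T' = max T 0"
  have "\<bar>renewal_closed s\<bar> \<le> 1 + T' / r + l * r * (T' / r) * (T' / r) + l * (1 + T' / r) * T'"
    if "s \<le> T" for s
  proof (cases "s < 0")
    case True
    then show ?thesis
      using l_pos r_pos by (simp add: renewal_closed_def T'_def)
  next
    case False
    then show ?thesis
      using that by (intro renewal_closed_bound) (auto simp: T'_def)
  qed
  then show ?thesis
    by blast
qed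

definition renewal_seg_antideriv :: "nat \<Rightarrow> real \<Rightarrow> real \<Rightarrow> real" where
  "renewal_seg_antideriv n t x = (l * r * v n - l * (1 + u n) * (t - x)) * exp (- l * x)"

lemma integral_renewal_seg:
  assumes "a \<le> b"
  shows "(LBINT x=a..b. l * exp (- l * x) * renewal_seg n (t - x))
           = renewal_seg_antideriv n t b - renewal_seg_antideriv n t a"
proof (rule interval_integral_FTC_real[OF assms])
  show "(renewal_seg_antideriv n t has_real_derivative l * exp (- l * x) * renewal_seg n (t - x)) (at x)" for x
    unfolding renewal_seg_antideriv_def[abs_def] renewal_seg_def
    by (rule derivative_eq_intros refl | simp)+ (simp add: algebra_simps)
qed (simp add: renewal_seg_def, intro continuous_intros)

lemma integral_renewal_closed_neg:
  assumes "t < 0"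
  shows "(\<integral>y. renewal_closed (t - y) \<partial>Y_law) = 0"
proof -
  have "AE y in Y_law. renewal_closed (t - y) = 0"
    using AE_Y_law by eventually_elim (use assms in \<open>auto simp: renewal_closed_def\<close>)
  then show ?thesis
    by (rule integral_eq_zero_AE)
qed

lemma integral_renewal_closed_split:
  assumes n: "real n * r \<le> t" "t < real (Suc n) * r"
  defines "s0 \<equiv> t - real n * r"
  shows "(\<integral>y. renewal_closed (t - y) \<partial>Y_law)
           = renewal_seg_antideriv n t s0 - renewal_seg_antideriv n t 0
             + (LBINT x=s0..r. l * exp (- l * x) * renewal_closed (t - x))
             + exp (- l * r) * renewal_closed (t - r)"
proof -
  have s0: "0 \<le> s0" "s0 < r"
    using n unfolding s0_def by (auto simp: algebra_simps)
  define g where "g x = l * exp (- l * x) * renewal_closed (t - x)" for x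
  have [measurable]: "g \<in> borel_measurable borel"
    unfolding g_def[abs_def] by measurable
  obtain B where B: "\<And>s. s \<le> t \<Longrightarrow> \<bar>renewal_closed s\<bar> \<le> B"
    using renewal_closed_locally_bounded by blast
  have g_bound: "\<bar>g x\<bar> \<le> l * B" if "0 \<le> x" for x
  proof -
    have "exp (- l * x) * \<bar>renewal_closed (t - x)\<bar> \<le> 1 * B"
      using that l_pos B[of t] B[of "t - x"] by (intro mult_mono) auto
    then show ?thesis
      using l_pos by (simp add: g_def abs_mult mult.assoc mult_left_mono)
  qed
  have "(\<integral>y. renewal_closed (t - y) \<partial>Y_law) = (LBINT x=0..r. g x) + exp (- l * r) * renewal_closed (t - r)"
    unfolding g_def by (rule integral_Y_law[where B=B]) (use B in auto)
  also have "(LBINT x=0..r. g x) = (LBINT x=0..s0. g x) + (LBINT x=s0..r. g x)"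
    using s0 interval_integrable_bounded[of g 0 r "l * B"] g_bound
    by (intro interval_integral_sum[symmetric]) (auto simp: min_def max_def zero_ereal_def)
  also have "(LBINT x=0..s0. g x) = (LBINT x=0..s0. l * exp (- l * x) * renewal_seg n (t - x))"
    unfolding zero_ereal_def
  proof (rule interval_integral_cong_Ioo[OF s0(1)])
    fix x
    assume "0 < x" "x < s0"
    then have "renewal_closed (t - x) = renewal_seg n (t - x)"
      using n by (intro renewal_closed_eq_seg) (auto simp: s0_def)
    then show "g x = l * exp (- l * x) * renewal_seg n (t - x)"
      by (simp add: g_def)
  qed
  also have "\<dots> = renewal_seg_antideriv n t s0 - renewal_seg_antideriv n t 0"
    using integral_renewal_seg[OF s0(1)] by (simp add: zero_ereal_def)
  finally show ?thesis
    by (simp add: g_def)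
qed

lemma renewal_closed_equation:
  "renewal_closed t = (if 0 \<le> t then 1 else 0) + (\<integral>y. renewal_closed (t - y) \<partial>Y_law)"
proof (cases "t < 0")
  case True
  then show ?thesis
    by (simp add: integral_renewal_closed_neg) (simp add: renewal_closed_def)
next
  case False
  define n where "n = nat \<lfloor>t / r\<rfloor>"
  define s0 where "s0 = t - real n * r"
  have "real n \<le> t / r" and "t / r < real n + 1"
    unfolding n_def using False r_pos by (simp_all add: of_nat_nat)
  then have n: "real n * r \<le> t" "t < real (Suc n) * r"
    using r_pos by (simp_all add: field_simps)
  then have s0: "0 \<le> s0" "s0 < r"
    unfolding s0_def by (auto simp: algebra_simps)
  let ?A = "renewal_seg_antideriv"
  let ?g = "\<lambda>x. l * exp (- l * x) * renewal_closed (t - x)"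
  note integral_eq = integral_renewal_closed_split[OF n, folded s0_def]
  txt \<open>On (s0, r) the point t - x lies in the segment preceding that of t.\<close>
  show ?thesis
  proof (cases n)
    case 0
    have "(LBINT x=s0..r. ?g x) = (LBINT x=s0..r. 0)"
      using s0 0 by (intro interval_integral_cong_Ioo) (auto simp: renewal_closed_def s0_def)
    moreover have "renewal_closed (t - r) = 0"
      using n 0 by (simp add: renewal_closed_def)
    moreover have "renewal_closed t = renewal_seg 0 t"
      using n 0 renewal_closed_eq_seg[of 0 t] by simp
    ultimately show ?thesis
      using integral_eq False 0
      by (simp add: renewal_seg_antideriv_def renewal_seg_def u_def v_def s0_def)
  next
    case (Suc m)
    have "(LBINT x=s0..r. ?g x) = (LBINT x=s0..r. l * exp (- l * x) * renewal_seg m (t - x))"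
    proof (rule interval_integral_cong_Ioo)
      fix x
      assume "s0 < x" "x < r"
      then have "renewal_closed (t - x) = renewal_seg m (t - x)"
        using n Suc by (intro renewal_closed_eq_seg) (auto simp: s0_def algebra_simps)
      then show "?g x = l * exp (- l * x) * renewal_seg m (t - x)"
        by simp
    qed (use s0 in simp)
    also have "\<dots> = ?A m t r - ?A m t s0"
      using s0 by (intro integral_renewal_seg) simp
    finally have "(LBINT x=s0..r. ?g x) = ?A m t r - ?A m t s0" .
    moreover have "renewal_closed (t - r) = renewal_seg m (t - r)"
      using n Suc by (intro renewal_closed_eq_seg) (auto simp: algebra_simps)
    moreover have "renewal_closed t = renewal_seg n t"
      using n by (rule renewal_closed_eq_seg)
    ultimately show ?thesis
      using integral_eq False u_Suc[of m] v_Suc[of m] u_Suc_eq_mult[of m]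
      unfolding renewal_seg_antideriv_def renewal_seg_def s0_def Suc
      by simp algebra
  qed
qed

lemma renewal_eq_closed: "renewal t = renewal_closed t"
proof -
  define D where "D s = renewal s - renewal_closed s" for s
  have "D t = 0"
  proof (rule renewal_equation_unique[of D])
    show "D \<in> borel_measurable borel"
      unfolding D_def[abs_def] by measurable
    show "D s = 0" if "s < 0" for s
      using that by (simp add: D_def renewal_neg renewal_closed_def)
    show "\<exists>B. \<forall>s\<le>T. \<bar>D s\<bar> \<le> B" for T
    proof -
      obtain B where B: "\<forall>s\<le>T. \<bar>renewal_closed s\<bar> \<le> B"
        using renewal_closed_locally_bounded by blast
      have "\<bar>D s\<bar> \<le> exp T / (1 - laplace_Y) + B" if "s \<le> T" for s
        using renewal_locally_bounded[OF that] B that unfolding D_def by force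
      then have "\<forall>s\<le>T. \<bar>D s\<bar> \<le> exp T / (1 - laplace_Y) + B"
        by blast
      then show ?thesis ..
    qed
    show "D s = (\<integral>y. D (s - y) \<partial>Y_law)" for s
    proof -
      obtain B where B: "\<forall>s'\<le>s. \<bar>renewal_closed s'\<bar> \<le> B"
        using renewal_closed_locally_bounded by blast
      have "integrable Y_law (\<lambda>y. renewal (s - y))"
        by (rule integrable_Y_law[where B="exp s / (1 - laplace_Y)"]) (auto intro: renewal_locally_bounded)
      moreover have "integrable Y_law (\<lambda>y. renewal_closed (s - y))"
        by (rule integrable_Y_law[where B=B]) (use B in auto)
      ultimately show ?thesis
        unfolding D_def
        by (subst renewal_equation, subst renewal_closed_equation)
           (simp add: Bochner_Integration.integral_diff)
    qed
  qed
  then show ?thesis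
    by (simp add: D_def)
qed

lemma raft_count_eq: "raft_count X r t \<omega> = Max {n. S n \<omega> \<le> t}"
  by (simp add: raft_count_def S_def Y_def)

text \<open>
  On the null set where infinitely many partial sums stay below t, raft_count is the
  unspecified value Max UNIV; measurability has to cover that case as well.
\<close>

lemma raft_count_measurable:
  assumes "0 \<le> t"
  shows "(\<lambda>\<omega>. raft_count X r t \<omega>) \<in> measurable M (count_space UNIV)"
  unfolding measurable_count_space_eq2_countable
proof safe
  fix j
  have "(\<lambda>\<omega>. raft_count X r t \<omega>) -` {j} \<inter> space M
        = {\<omega>\<in>space M. if \<exists>m. \<forall>n. S n \<omega> \<le> t \<longrightarrow> n \<le> m
                       then S j \<omega> \<le> t \<and> (\<forall>n. S n \<omega> \<le> t \<longrightarrow> n \<le> j)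
                       else Max (UNIV :: nat set) = j}"
  proof -
    have "0 \<in> {n. S n \<omega> \<le> t}" for \<omega>
      using assms by (simp add: S_def)
    then have "{n. S n \<omega> \<le> t} \<noteq> {}" for \<omega>
      by blast
    then have "raft_count X r t \<omega> = j \<longleftrightarrow>
                 (if \<exists>m. \<forall>n. S n \<omega> \<le> t \<longrightarrow> n \<le> m
                  then S j \<omega> \<le> t \<and> (\<forall>n. S n \<omega> \<le> t \<longrightarrow> n \<le> j)
                  else Max (UNIV :: nat set) = j)" for \<omega>
      unfolding raft_count_eq by (subst Max_nat_eq_iff) (simp_all, blast)
    then show ?thesis
      by blast
  qed
  also have "\<dots> \<in> sets M"
    by measurable
  finally show "(\<lambda>\<omega>. raft_count X r t \<omega>) -` {j} \<inter> space M \<in> sets M" .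
qed simp

lemma AE_X_pos: "AE \<omega> in M. \<forall>k\<ge>1. 0 < X k \<omega>"
  unfolding AE_all_countable
proof
  fix k :: nat
  show "AE \<omega> in M. 1 \<le> k \<longrightarrow> 0 < X k \<omega>"
  proof (cases "1 \<le> k")
    case True
    have "prob {\<omega>\<in>space M. X k \<omega> \<le> 0} = 1 - exp (- 0 * l)"
      by (rule exponential_distributedD_le[OF distr[OF True]]) (use l_pos in auto)
    then have "emeasure M {\<omega>\<in>space M. X k \<omega> \<le> 0} = 0"
      by (simp add: emeasure_eq_measure)
    then show ?thesis
      by (intro AE_I[where N="{\<omega>\<in>space M. X k \<omega> \<le> 0}"]) (use True in auto)
  qed simp
qed

lemma AE_S_unbounded: "AE \<omega> in M. \<exists>m. t < S m \<omega>"
proof -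
  define N where "N = {\<omega>\<in>space M. \<forall>m. S m \<omega> \<le> t}"
  have [measurable]: "N \<in> sets M"
    unfolding N_def by measurable
  have "prob N \<le> F m t" for m
    unfolding F_def N_def by (rule finite_measure_mono) auto
  then have "prob N \<le> 0"
    by (intro LIMSEQ_le_const[OF F_tendsto_0]) auto
  then have "emeasure M N = 0"
    by (simp add: emeasure_eq_measure measure_le_0_iff)
  then show ?thesis
    by (intro AE_I[where N=N]) (auto simp: N_def not_less)
qed

lemma S_mono:
  assumes "\<forall>k\<ge>1. 0 < X k \<omega>" and "n \<le> n'"
  shows "S n \<omega> \<le> S n' \<omega>"
proof (rule lift_Suc_mono_le[OF _ assms(2)])
  show "S k \<omega> \<le> S (Suc k) \<omega>" for k
    using assms(1)[rule_format, of "Suc k"] r_pos by (simp add: S_Suc Y_def)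
qed

lemma raft_count_eq_suminf:
  assumes "0 \<le> t" and pos: "\<forall>k\<ge>1. 0 < X k \<omega>" and "t < S m \<omega>" and "\<omega> \<in> space M"
  shows "ennreal (real (raft_count X r t \<omega>)) = (\<Sum>n. indicator {\<omega>\<in>space M. S (Suc n) \<omega> \<le> t} \<omega>)"
proof -
  define A where "A = {n. S n \<omega> \<le> t}"
  define K where "K = raft_count X r t \<omega>"
  have "A \<subseteq> {..<m}"
  proof
    fix n
    assume "n \<in> A"
    then have "S n \<omega> < S m \<omega>"
      using assms(3) by (simp add: A_def)
    then show "n \<in> {..<m}"
      using S_mono[OF pos, of m n] by (cases "m \<le> n") auto
  qed
  then have "finite A"
    by (rule finite_subset) simp
  moreover have "0 \<in> A"
    using assms(1) by (simp add: A_def S_def)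
  ultimately have "K \<in> A" and K_max: "\<And>n. n \<in> A \<Longrightarrow> n \<le> K"
    unfolding K_def raft_count_eq A_def[symmetric] by (auto intro: Max_in)
  then have S_le_iff: "S n \<omega> \<le> t \<longleftrightarrow> n \<le> K" for n
    using S_mono[OF pos, of n K] unfolding A_def by force
  have "(\<lambda>n. indicator {\<omega>\<in>space M. S (Suc n) \<omega> \<le> t} \<omega> :: ennreal) = (\<lambda>n. if n < K then 1 else 0)"
    using assms(4) by (auto simp: fun_eq_iff indicator_def S_le_iff Suc_le_eq)
  moreover have "(\<Sum>n. if n < K then 1 else 0 :: ennreal) = (\<Sum>n<K. if n < K then 1 else 0)"
    by (rule suminf_finite) auto
  ultimately show ?thesis
    by (simp add: K_def ennreal_of_nat_eq_real_of_nat)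
qed

lemma expectation_raft_count:
  assumes "0 \<le> t"
  shows "expectation (\<lambda>\<omega>. real (raft_count X r t \<omega>)) = renewal t - 1"
proof -
  have [measurable]: "(\<lambda>\<omega>. real (raft_count X r t \<omega>)) \<in> borel_measurable M"
    using raft_count_measurable[OF assms] by (rule measurable_compose) simp
  have renewal_minus_1: "renewal t - 1 = (\<Sum>n. F (Suc n) t)"
    unfolding renewal_def using suminf_split_head[OF summable_F[of t]] assms by (simp add: F_0)
  have "(\<integral>\<^sup>+\<omega>. ennreal (real (raft_count X r t \<omega>)) \<partial>M)
        = (\<integral>\<^sup>+\<omega>. (\<Sum>n. indicator {\<omega>\<in>space M. S (Suc n) \<omega> \<le> t} \<omega>) \<partial>M)"
  proof (rule nn_integral_cong_AE)
    show "AE \<omega> in M. ennreal (real (raft_count X r t \<omega>))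
                        = (\<Sum>n. indicator {\<omega>\<in>space M. S (Suc n) \<omega> \<le> t} \<omega>)"
      using AE_X_pos AE_S_unbounded[of t] AE_space
      by eventually_elim (use raft_count_eq_suminf[OF assms] in blast)
  qed
  also have "\<dots> = (\<Sum>n. ennreal (F (Suc n) t))"
    by (subst nn_integral_suminf) (auto simp: F_def emeasure_eq_measure)
  also have "\<dots> = ennreal (renewal t - 1)"
    unfolding renewal_minus_1 by (intro suminf_ennreal2 summable_F_Suc F_nonneg)
  finally have "(\<integral>\<^sup>+\<omega>. ennreal (real (raft_count X r t \<omega>)) \<partial>M) = ennreal (renewal t - 1)" .
  moreover have "0 \<le> renewal t - 1"
    unfolding renewal_minus_1 by (intro suminf_nonneg summable_F_Suc F_nonneg)
  ultimately show ?thesis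
    by (subst integral_eq_nn_integral) auto
qed

end

theorem mainTheorem8:
  fixes M :: "'a measure" and X :: "nat \<Rightarrow> 'a \<Rightarrow> real"
    and l r t :: real and n :: nat
  assumes "prob_space M"
    and "prob_space.indep_vars M (\<lambda>_. borel) X {1..}"
    and "\<And>k. k \<ge> 1 \<Longrightarrow> distributed M lborel (X k) (exponential_density l)"
    and "l > 0" and "r > 0"
    and "n \<ge> 1" and "real n * r \<le> t" and "t < real (n + 1) * r"
  shows "prob_space.expectation M (\<lambda>\<omega>. real (raft_count X r t \<omega>)) / t
           = l * (1 + (\<Sum>k\<in>{1..n}. exp (- l * real k * r)))
             + ((\<Sum>k\<in>{1..n}. exp (- l * real k * r))
                - l * r * (\<Sum>k\<in>{1..n}. real k * exp (- l * real k * r))) / t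
       \<and> (\<Sum>k\<in>{1..n}. exp (- l * real k * r))
           = exp (- l * r) / (1 - exp (- l * r)) * (1 - exp (- l * real n * r))
       \<and> (\<Sum>k\<in>{1..n}. real k * exp (- l * real k * r))
           = exp (- l * r) / (1 - exp (- l * r))^2
             * (1 - real (n + 1) * exp (- l * real n * r) + real n * exp (- l * real (n + 1) * r))"
proof -
  interpret raft M X l r
    using assms(1-5) by (simp add: raft_def raft_axioms_def)
  have "0 < real n * r"
    using assms(5,6) by simp
  then have "0 < t"
    using assms(7) by linarith
  have "expectation (\<lambda>\<omega>. real (raft_count X r t \<omega>)) = renewal_seg n t - 1"
    using assms(7,8) \<open>0 < t\<close>
    by (simp add: expectation_raft_count renewal_eq_closed renewal_closed_eq_seg)
  then have "expectation (\<lambda>\<omega>. real (raft_count X r t \<omega>)) / t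
               = l * (1 + u n) + (u n - l * r * v n) / t"
    using \<open>0 < t\<close> by (simp add: renewal_seg_def) (simp add: field_simps)
  then show ?thesis
    using u_closed_form[of n] v_closed_form[of n] unfolding u_def v_def by blast
qed

end
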